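(* Let $\Sigma$ be a dec-DNNF circuit whose root is a decision node labelled by the variable $x$, with 0-child $u$ and 1-child $w$. Let $S\subseteq\textit{IP}(\Sigma)$ and define $S_u=\{t\mid t\wedge\overline{x}\in S\}\cup(S\cap\textit{IP}(\Sigma_u))$, $S_w=\{t\mid t\wedge x\in S\}\cup(S\cap\textit{IP}(\Sigma_w))$ and $S'=\{t\mid t\in S,\ x\notin var(t)\}$. Then $S_u\subseteq\textit{IP}(\Sigma_u)$ and $S_w\subseteq\textit{IP}(\Sigma_w)$, and $S=\textit{IP}(\Sigma)$ if and only if $S_u=\textit{IP}(\Sigma_u)$, $S_w=\textit{IP}(\Sigma_w)$, and $S'=\max(\{t_u\wedge t_w\mid t_u\in S_u,\ t_w\in S_w\},\models)$.
   Context: A term is a conjunction of literals (possibly empty); $var(t)$ is the set of variables occurring in $t$. A term $t$ is an implicant of $f$ if $t\models f$, and prime if no term obtained by deleting a literal from $t$ is an implicant. $\textit{IP}(\cdot)$ denotes the set of prime implicants of the function computed by a circuit. A dec-DNNF circuit is a rooted DAG whose leaves are labelled $0$, $1$ or a literal and whose internal nodes are decision nodes (labelled by a variable $x$, with 0-child $u$ and 1-child $w$, computing $(\overline{x}\wedge f_u)\vee(x\wedge f_w)$ where $f_u,f_w$ are the functions computed at the children) or $\wedge$-nodes whose children's subcircuits mention pairwise disjoint sets of variables. $\Sigma_v$ denotes the subcircuit rooted at node $v$. For a set $T$ of terms, $\max(T,\models)$ is the set of terms of $T$ that do not entail another term of $T$. *)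

theory Defs
  imports Main
begin

text \<open>Literals: (v, True) is the positive literal v, (v, False) its negation.
  A term is a finite, consistent set of literals (read as their conjunction).\<close>

type_synonym 'v lit = "'v \<times> bool"
type_synonym 'v trm = "'v lit set"

definition is_term :: "'v trm \<Rightarrow> bool" where
  "is_term t \<longleftrightarrow> finite t \<and> \<not> (\<exists>v. (v, True) \<in> t \<and> (v, False) \<in> t)"

definition var_term :: "'v trm \<Rightarrow> 'v set" where
  "var_term t = fst ` t"

definition sat_term :: "('v \<Rightarrow> bool) \<Rightarrow> 'v trm \<Rightarrow> bool" where
  "sat_term \<alpha> t \<longleftrightarrow> (\<forall>l\<in>t. \<alpha> (fst l) = snd l)"

definition implicant :: "'v trm \<Rightarrow> (('v \<Rightarrow> bool) \<Rightarrow> bool) \<Rightarrow> bool" where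
  "implicant t f \<longleftrightarrow> is_term t \<and> (\<forall>\<alpha>. sat_term \<alpha> t \<longrightarrow> f \<alpha>)"

definition prime_implicant :: "'v trm \<Rightarrow> (('v \<Rightarrow> bool) \<Rightarrow> bool) \<Rightarrow> bool" where
  "prime_implicant t f \<longleftrightarrow> implicant t f \<and> (\<forall>l\<in>t. \<not> implicant (t - {l}) f)"

definition term_entails :: "'v trm \<Rightarrow> 'v trm \<Rightarrow> bool" where
  "term_entails t t' \<longleftrightarrow> (\<forall>\<alpha>. sat_term \<alpha> t \<longrightarrow> sat_term \<alpha> t')"

definition max_ent :: "'v trm set \<Rightarrow> 'v trm set" where
  "max_ent T = {t \<in> T. \<not> (\<exists>t'\<in>T. t' \<noteq> t \<and> term_entails t t')}"

text \<open>Circuits (DAG sharing is irrelevant for semantics; represented as trees).\<close>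
datatype 'v circuit =
    CFalse
  | CTrue
  | CLit 'v bool
  | CDec 'v "'v circuit" "'v circuit"   \<comment> \<open>variable, 0-child, 1-child\<close>
  | CAnd "'v circuit list"

fun eval :: "'v circuit \<Rightarrow> ('v \<Rightarrow> bool) \<Rightarrow> bool" where
  "eval CFalse \<alpha> = False"
| "eval CTrue \<alpha> = True"
| "eval (CLit v b) \<alpha> = (\<alpha> v = b)"
| "eval (CDec x u w) \<alpha> = ((\<not> \<alpha> x \<and> eval u \<alpha>) \<or> (\<alpha> x \<and> eval w \<alpha>))"
| "eval (CAnd cs) \<alpha> = (\<forall>c\<in>set cs. eval c \<alpha>)"

fun cvars :: "'v circuit \<Rightarrow> 'v set" where
  "cvars CFalse = {}"
| "cvars CTrue = {}"
| "cvars (CLit v b) = {v}"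
| "cvars (CDec x u w) = insert x (cvars u \<union> cvars w)"
| "cvars (CAnd cs) = (\<Union>c\<in>set cs. cvars c)"

text \<open>dec-DNNF: decision nodes (whose variable does not occur below them, as in the
  standard definition of decision-DNNF where a decision node is an OR of two
  decomposable ANDs) and decomposable AND-nodes.\<close>
fun dec_dnnf :: "'v circuit \<Rightarrow> bool" where
  "dec_dnnf CFalse = True"
| "dec_dnnf CTrue = True"
| "dec_dnnf (CLit v b) = True"
| "dec_dnnf (CDec x u w) =
     (dec_dnnf u \<and> dec_dnnf w \<and> x \<notin> cvars u \<and> x \<notin> cvars w)"
| "dec_dnnf (CAnd cs) =
     ((\<forall>c\<in>set cs. dec_dnnf c) \<and>
      (\<forall>i j. i < length cs \<and> j < length cs \<and> i \<noteq> j \<longrightarrow> cvars (cs ! i) \<inter> cvars (cs ! j) = {}))"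

definition IP :: "'v circuit \<Rightarrow> 'v trm set" where
  "IP C = {t. prime_implicant t (eval C)}"

end

(* Let F = (if x then f1 else f0) be the function of the root, where f0 and f1 do not depend on x.
   A prime implicant of F either avoids x, and then it is a prime implicant of f0 /\ f1, that is,
   a maximal consistent union of a prime implicant of f0 and one of f1; or it is t /\ -x
   (resp. t /\ x) for a prime implicant t of f0 (resp. f1) that does not imply the other branch.
   Conversely, a prime implicant of a branch reappears in IP(F) unchanged if it implies the other
   branch, and extended by its decision literal otherwise. *)

theory Submission
  imports Defs
begin

definition prime_implicants :: "(('v \<Rightarrow> bool) \<Rightarrow> bool) \<Rightarrow> 'v trm set" where
  "prime_implicants f = {t. prime_implicant t f}"

definition conj_terms :: "'v trm set \<Rightarrow> 'v trm set \<Rightarrow> 'v trm set" where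
  "conj_terms A B = {tu \<union> tw | tu tw. tu \<in> A \<and> tw \<in> B \<and> is_term (tu \<union> tw)}"

lemma is_term_subset: "is_term t \<Longrightarrow> t' \<subseteq> t \<Longrightarrow> is_term t'"
  unfolding is_term_def by (meson finite_subset subsetD)

lemma is_term_insert: "x \<notin> var_term t \<Longrightarrow> is_term (insert (x, b) t) \<longleftrightarrow> is_term t"
  unfolding is_term_def var_term_def by force

lemma sat_term_insert: "sat_term \<alpha> (insert l t) \<longleftrightarrow> \<alpha> (fst l) = snd l \<and> sat_term \<alpha> t"
  unfolding sat_term_def by simp

lemma sat_term_upd: "x \<notin> var_term t \<Longrightarrow> sat_term (\<alpha>(x := b)) t = sat_term \<alpha> t"
  unfolding sat_term_def var_term_def by force

lemma var_term_Diff: "x \<notin> var_term t \<Longrightarrow> x \<notin> var_term (t - A)"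
  unfolding var_term_def by blast

lemma var_term_Diff_lit:
  assumes "is_term t" "(x, b) \<in> t"
  shows "x \<notin> var_term (t - {(x, b)})"
proof
  assume "x \<in> var_term (t - {(x, b)})"
  then obtain l where "l \<in> t" "l \<noteq> (x, b)" "fst l = x" unfolding var_term_def by blast
  then have "(x, \<not> b) \<in> t" by (cases l) auto
  then show False using assms unfolding is_term_def by (cases b) auto
qed

lemma term_entails_iff_subset:
  assumes "is_term t"
  shows "term_entails t t' \<longleftrightarrow> t' \<subseteq> t"
proof
  assume entails: "term_entails t t'"
  show "t' \<subseteq> t"
  proof
    fix l assume "l \<in> t'"
    obtain v c where l: "l = (v, c)" by force
    show "l \<in> t"
    proof (rule ccontr)
      assume "l \<notin> t"
      \<comment> \<open>falsify l while satisfying t, which is consistent and does not contain l\<close>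
      define \<alpha> where "\<alpha> y = (if y = v then \<not> c else (y, True) \<in> t)" for y
      have "\<alpha> y = d" if "(y, d) \<in> t" for y d
      proof (cases "y = v")
        case True
        then show ?thesis using that \<open>l \<notin> t\<close> unfolding \<alpha>_def l by (cases d; cases c) auto
      next
        case False
        then show ?thesis using that assms unfolding \<alpha>_def is_term_def by (cases d) auto
      qed
      then have "sat_term \<alpha> t" unfolding sat_term_def by auto
      then have "sat_term \<alpha> t'" using entails unfolding term_entails_def by blast
      then show False using \<open>l \<in> t'\<close> unfolding sat_term_def \<alpha>_def l by force
    qed
  qed
next
  show "t' \<subseteq> t \<Longrightarrow> term_entails t t'"
    unfolding term_entails_def sat_term_def by blast
qed

lemma implicant_is_term: "implicant t f \<Longrightarrow> is_term t"
  unfolding implicant_def by blast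

lemma implicant_superset: "implicant t' f \<Longrightarrow> t' \<subseteq> t \<Longrightarrow> is_term t \<Longrightarrow> implicant t f"
  unfolding implicant_def sat_term_def by blast

lemma implicant_conj_iff: "implicant t (\<lambda>\<alpha>. f \<alpha> \<and> g \<alpha>) \<longleftrightarrow> implicant t f \<and> implicant t g"
  unfolding implicant_def by blast

lemma implicant_contains_prime_implicant:
  assumes "implicant t f"
  shows "\<exists>p \<subseteq> t. prime_implicant p f"
proof -
  have "finite t" using assms unfolding implicant_def is_term_def by blast
  then show ?thesis using assms
  proof (induction "card t" arbitrary: t rule: less_induct)
    case less
    show ?case
    proof (cases "prime_implicant t f")
      case False
      then obtain l where "l \<in> t" "implicant (t - {l}) f"
        using less.prems(2) unfolding prime_implicant_def by blast
      moreover have "card (t - {l}) < card t"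
        using \<open>finite t\<close> \<open>l \<in> t\<close> by (rule card_Diff1_less)
      ultimately show ?thesis using less.hyps[of "t - {l}"] \<open>finite t\<close> by auto
    qed auto
  qed
qed

lemma prime_implicant_iff_minimal:
  "prime_implicant t f \<longleftrightarrow> implicant t f \<and> (\<forall>t' \<subseteq> t. implicant t' f \<longrightarrow> t' = t)"
proof
  assume prime: "prime_implicant t f"
  have "t' = t" if "t' \<subseteq> t" "implicant t' f" for t'
  proof (rule ccontr)
    assume "t' \<noteq> t"
    then obtain l where "l \<in> t" "t' \<subseteq> t - {l}" using \<open>t' \<subseteq> t\<close> by blast
    moreover have "is_term (t - {l})"
      using prime is_term_subset unfolding prime_implicant_def implicant_def by blast
    ultimately have "implicant (t - {l}) f" using implicant_superset \<open>implicant t' f\<close> by blast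
    then show False using prime \<open>l \<in> t\<close> unfolding prime_implicant_def by blast
  qed
  then show "implicant t f \<and> (\<forall>t' \<subseteq> t. implicant t' f \<longrightarrow> t' = t)"
    using prime unfolding prime_implicant_def by blast
next
  assume minimal: "implicant t f \<and> (\<forall>t' \<subseteq> t. implicant t' f \<longrightarrow> t' = t)"
  have "\<not> implicant (t - {l}) f" if "l \<in> t" for l
    using minimal that by blast
  then show "prime_implicant t f" using minimal unfolding prime_implicant_def by blast
qed

lemma prime_implicant_of_stronger:
  assumes "prime_implicant t f" "implicant t g" "\<And>\<alpha>. g \<alpha> \<Longrightarrow> f \<alpha>"
  shows "prime_implicant t g"
proof -
  have "\<not> implicant (t - {l}) g" if "l \<in> t" for l
  proof
    assume "implicant (t - {l}) g"
    then have "implicant (t - {l}) f" using assms(3) unfolding implicant_def by blast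
    then show False using assms(1) that unfolding prime_implicant_def by blast
  qed
  then show ?thesis using assms(2) unfolding prime_implicant_def by blast
qed

lemma prime_implicant_iff_max_ent:
  assumes implicants: "\<And>m. m \<in> M \<Longrightarrow> implicant m f"
    and covers: "\<And>s. implicant s f \<Longrightarrow> \<exists>m \<in> M. m \<subseteq> s"
  shows "prime_implicant t f \<longleftrightarrow> t \<in> max_ent M"
proof
  assume "prime_implicant t f"
  then have "implicant t f" and minimal: "\<And>t'. t' \<subseteq> t \<Longrightarrow> t' \<in> M \<Longrightarrow> t' = t"
    using implicants unfolding prime_implicant_iff_minimal by blast+
  obtain m where "m \<in> M" "m \<subseteq> t" using covers[OF \<open>implicant t f\<close>] by blast
  then have "t \<in> M" using minimal by blast
  then show "t \<in> max_ent M"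
    using minimal term_entails_iff_subset[OF implicant_is_term[OF \<open>implicant t f\<close>]]
    unfolding max_ent_def by blast
next
  assume max: "t \<in> max_ent M"
  then have "implicant t f" using implicants unfolding max_ent_def by blast
  moreover have "t' = t" if "t' \<subseteq> t" "implicant t' f" for t'
  proof -
    obtain m where "m \<in> M" "m \<subseteq> t'" using covers \<open>implicant t' f\<close> by blast
    moreover have "term_entails t m"
      using term_entails_iff_subset[OF implicant_is_term[OF \<open>implicant t f\<close>]]
        \<open>m \<subseteq> t'\<close> \<open>t' \<subseteq> t\<close> by blast
    ultimately have "m = t" using max unfolding max_ent_def by blast
    then show "t' = t" using \<open>m \<subseteq> t'\<close> \<open>t' \<subseteq> t\<close> by blast
  qed
  ultimately show "prime_implicant t f" unfolding prime_implicant_iff_minimal by blast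
qed

lemma prime_implicant_conj_iff:
  "prime_implicant t (\<lambda>\<alpha>. f \<alpha> \<and> g \<alpha>) \<longleftrightarrow>
    t \<in> max_ent (conj_terms (prime_implicants f) (prime_implicants g))"
proof (rule prime_implicant_iff_max_ent)
  fix m assume "m \<in> conj_terms (prime_implicants f) (prime_implicants g)"
  then obtain tu tw where m: "m = tu \<union> tw" "is_term m"
    and "prime_implicant tu f" "prime_implicant tw g"
    unfolding conj_terms_def prime_implicants_def by blast
  then have "implicant m f" "implicant m g"
    using implicant_superset unfolding prime_implicant_def by blast+
  then show "implicant m (\<lambda>\<alpha>. f \<alpha> \<and> g \<alpha>)"
    unfolding implicant_def by blast
next
  fix s assume s: "implicant s (\<lambda>\<alpha>. f \<alpha> \<and> g \<alpha>)"
  then have "implicant s f" "implicant s g" unfolding implicant_def by blast+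
  obtain tu where "tu \<subseteq> s" "prime_implicant tu f"
    using implicant_contains_prime_implicant[OF \<open>implicant s f\<close>] by blast
  moreover obtain tw where "tw \<subseteq> s" "prime_implicant tw g"
    using implicant_contains_prime_implicant[OF \<open>implicant s g\<close>] by blast
  moreover have "is_term (tu \<union> tw)"
    using is_term_subset[OF implicant_is_term[OF s]] \<open>tu \<subseteq> s\<close> \<open>tw \<subseteq> s\<close> by simp
  ultimately have "tu \<union> tw \<in> conj_terms (prime_implicants f) (prime_implicants g)"
    unfolding conj_terms_def prime_implicants_def by blast
  then show "\<exists>m \<in> conj_terms (prime_implicants f) (prime_implicants g). m \<subseteq> s"
    using \<open>tu \<subseteq> s\<close> \<open>tw \<subseteq> s\<close> by (intro bexI[of _ "tu \<union> tw"]) simp_all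
qed

definition indep :: "'v \<Rightarrow> (('v \<Rightarrow> bool) \<Rightarrow> bool) \<Rightarrow> bool" where
  "indep x f \<longleftrightarrow> (\<forall>\<alpha> b. f (\<alpha>(x := b)) = f \<alpha>)"

lemma prime_implicant_indep:
  assumes "indep x f" "prime_implicant t f"
  shows "x \<notin> var_term t"
proof
  assume "x \<in> var_term t"
  then obtain b where "(x, b) \<in> t" unfolding var_term_def by force
  have "is_term t" using assms(2) unfolding prime_implicant_def implicant_def by blast
  \<comment> \<open>setting x to b satisfies the literal dropped from t without changing f\<close>
  have "f \<alpha>" if "sat_term \<alpha> (t - {(x, b)})" for \<alpha>
  proof -
    have "sat_term (\<alpha>(x := b)) (t - {(x, b)})"
      using that sat_term_upd[OF var_term_Diff_lit[OF \<open>is_term t\<close> \<open>(x, b) \<in> t\<close>]] by simp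
    then have "sat_term (\<alpha>(x := b)) (insert (x, b) (t - {(x, b)}))"
      unfolding sat_term_insert by simp
    then have "sat_term (\<alpha>(x := b)) t" by (simp only: insert_Diff[OF \<open>(x, b) \<in> t\<close>])
    then have "f (\<alpha>(x := b))" using assms(2) unfolding prime_implicant_def implicant_def by blast
    then show "f \<alpha>" using assms(1) unfolding indep_def by simp
  qed
  then have "implicant (t - {(x, b)}) f"
    using is_term_subset[OF \<open>is_term t\<close>, of "t - {(x, b)}"] unfolding implicant_def by blast
  then show False using assms(2) \<open>(x, b) \<in> t\<close> unfolding prime_implicant_def by blast
qed

lemma eval_indep: "x \<notin> cvars c \<Longrightarrow> indep x (eval c)"
proof -
  have "x \<notin> cvars c \<Longrightarrow> eval c (\<alpha>(x := b)) = eval c \<alpha>" for \<alpha> b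
    by (induction c) auto
  then show "x \<notin> cvars c \<Longrightarrow> indep x (eval c)" unfolding indep_def by blast
qed

definition decide :: "'v \<Rightarrow> (bool \<Rightarrow> ('v \<Rightarrow> bool) \<Rightarrow> bool) \<Rightarrow> ('v \<Rightarrow> bool) \<Rightarrow> bool" where
  "decide x f \<alpha> \<longleftrightarrow> f (\<alpha> x) \<alpha>"

lemma eval_CDec: "eval (CDec x u w) = decide x (\<lambda>b. if b then eval w else eval u)"
  by (auto simp: decide_def fun_eq_iff)

definition lit_quotient :: "'v \<Rightarrow> bool \<Rightarrow> 'v trm set \<Rightarrow> 'v trm set" where
  "lit_quotient x b S = {t. x \<notin> var_term t \<and> insert (x, b) t \<in> S}"

locale decision =
  fixes x :: 'v and f :: "bool \<Rightarrow> ('v \<Rightarrow> bool) \<Rightarrow> bool"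
  assumes indep: "indep x (f b)"
begin

lemma implicant_decide_iff:
  assumes "x \<notin> var_term t"
  shows "implicant t (decide x f) \<longleftrightarrow> implicant t (\<lambda>\<alpha>. f False \<alpha> \<and> f True \<alpha>)"
proof
  assume imp: "implicant t (decide x f)"
  have "f b \<alpha>" if "sat_term \<alpha> t" for b \<alpha>
  proof -
    have "sat_term (\<alpha>(x := b)) t" using that sat_term_upd[OF \<open>x \<notin> var_term t\<close>] by simp
    then have "f b (\<alpha>(x := b))" using imp unfolding implicant_def decide_def by fastforce
    then show "f b \<alpha>" using indep unfolding indep_def by simp
  qed
  then show "implicant t (\<lambda>\<alpha>. f False \<alpha> \<and> f True \<alpha>)" using imp unfolding implicant_def by blast
next
  assume "implicant t (\<lambda>\<alpha>. f False \<alpha> \<and> f True \<alpha>)"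
  then show "implicant t (decide x f)" unfolding implicant_def decide_def by (metis (full_types))
qed

lemma prime_implicant_decide_iff:
  assumes "x \<notin> var_term t"
  shows "prime_implicant t (decide x f) \<longleftrightarrow> prime_implicant t (\<lambda>\<alpha>. f False \<alpha> \<and> f True \<alpha>)"
proof -
  have "implicant (t - {l}) (decide x f) \<longleftrightarrow> implicant (t - {l}) (\<lambda>\<alpha>. f False \<alpha> \<and> f True \<alpha>)" for l
    using implicant_decide_iff[OF var_term_Diff[OF \<open>x \<notin> var_term t\<close>]] .
  then show ?thesis
    unfolding prime_implicant_def using implicant_decide_iff[OF \<open>x \<notin> var_term t\<close>] by simp
qed

lemma implicant_insert_decide_iff:
  assumes "x \<notin> var_term t"
  shows "implicant (insert (x, b) t) (decide x f) \<longleftrightarrow> implicant t (f b)"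
proof
  assume imp: "implicant (insert (x, b) t) (decide x f)"
  have "f b \<alpha>" if "sat_term \<alpha> t" for \<alpha>
  proof -
    have "sat_term (\<alpha>(x := b)) (insert (x, b) t)"
      using that sat_term_upd[OF \<open>x \<notin> var_term t\<close>] by (simp add: sat_term_insert)
    then have "f b (\<alpha>(x := b))" using imp unfolding implicant_def decide_def by fastforce
    then show "f b \<alpha>" using indep unfolding indep_def by simp
  qed
  moreover have "is_term t"
    using imp is_term_insert[OF \<open>x \<notin> var_term t\<close>] unfolding implicant_def by blast
  ultimately show "implicant t (f b)" unfolding implicant_def by blast
next
  assume imp: "implicant t (f b)"
  then have "decide x f \<alpha>" if "sat_term \<alpha> (insert (x, b) t)" for \<alpha>
    using that unfolding implicant_def decide_def sat_term_insert by simp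
  moreover have "is_term (insert (x, b) t)"
    using imp is_term_insert[OF \<open>x \<notin> var_term t\<close>] unfolding implicant_def by blast
  ultimately show "implicant (insert (x, b) t) (decide x f)" unfolding implicant_def by blast
qed

lemma prime_implicant_insert_decide_iff:
  assumes "x \<notin> var_term t"
  shows "prime_implicant (insert (x, b) t) (decide x f) \<longleftrightarrow>
    prime_implicant t (f b) \<and> \<not> implicant t (f (\<not> b))"
proof -
  have "(x, b) \<notin> t" using \<open>x \<notin> var_term t\<close> unfolding var_term_def by force
  then have drop: "insert (x, b) t - {(x, b)} = t"
    "\<And>l. l \<in> t \<Longrightarrow> insert (x, b) t - {l} = insert (x, b) (t - {l})"
    by auto
  have "prime_implicant (insert (x, b) t) (decide x f) \<longleftrightarrow>
      implicant t (f b) \<and> \<not> implicant t (decide x f) \<and>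
      (\<forall>l \<in> t. \<not> implicant (insert (x, b) (t - {l})) (decide x f))"
    unfolding prime_implicant_def implicant_insert_decide_iff[OF \<open>x \<notin> var_term t\<close>] using drop by auto
  also have "\<dots> \<longleftrightarrow> implicant t (f b) \<and> \<not> (implicant t (f False) \<and> implicant t (f True)) \<and>
      (\<forall>l \<in> t. \<not> implicant (t - {l}) (f b))"
    using implicant_insert_decide_iff[OF var_term_Diff[OF \<open>x \<notin> var_term t\<close>]]
    by (simp add: implicant_decide_iff[OF \<open>x \<notin> var_term t\<close>] implicant_conj_iff)
  also have "\<dots> \<longleftrightarrow> prime_implicant t (f b) \<and> \<not> implicant t (f (\<not> b))"
    unfolding prime_implicant_def by (cases b) auto
  finally show ?thesis .
qed

lemma prime_implicants_decide_without_var: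
  "{t \<in> prime_implicants (decide x f). x \<notin> var_term t} =
    max_ent (conj_terms (prime_implicants (f False)) (prime_implicants (f True)))"
proof (intro set_eqI iffI)
  fix t assume "t \<in> {t \<in> prime_implicants (decide x f). x \<notin> var_term t}"
  then show "t \<in> max_ent (conj_terms (prime_implicants (f False)) (prime_implicants (f True)))"
    using prime_implicant_decide_iff prime_implicant_conj_iff
    unfolding prime_implicants_def by blast
next
  fix t assume "t \<in> max_ent (conj_terms (prime_implicants (f False)) (prime_implicants (f True)))"
  then have prime: "prime_implicant t (\<lambda>\<alpha>. f False \<alpha> \<and> f True \<alpha>)"
    using prime_implicant_conj_iff by blast
  have "indep x (\<lambda>\<alpha>. f False \<alpha> \<and> f True \<alpha>)" using indep unfolding indep_def by simp
  then have "x \<notin> var_term t" using prime by (rule prime_implicant_indep)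
  then show "t \<in> {t \<in> prime_implicants (decide x f). x \<notin> var_term t}"
    using prime prime_implicant_decide_iff unfolding prime_implicants_def by blast
qed

lemma lit_quotient_subset:
  assumes "S \<subseteq> prime_implicants (decide x f)"
  shows "lit_quotient x b S \<subseteq> prime_implicants (f b)"
proof
  fix t assume "t \<in> lit_quotient x b S"
  then have "x \<notin> var_term t" "prime_implicant (insert (x, b) t) (decide x f)"
    using assms unfolding lit_quotient_def prime_implicants_def by blast+
  then show "t \<in> prime_implicants (f b)"
    using prime_implicant_insert_decide_iff unfolding prime_implicants_def by simp
qed

lemma lit_quotient_prime_implicants_decide:
  "lit_quotient x b (prime_implicants (decide x f)) \<union>
      (prime_implicants (decide x f) \<inter> prime_implicants (f b)) = prime_implicants (f b)"
proof
  show "prime_implicants (f b) \<subseteq> lit_quotient x b (prime_implicants (decide x f)) \<union>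
      (prime_implicants (decide x f) \<inter> prime_implicants (f b))"
  proof
    fix t assume "t \<in> prime_implicants (f b)"
    then have prime: "prime_implicant t (f b)" unfolding prime_implicants_def by simp
    have "x \<notin> var_term t" using prime_implicant_indep[OF indep prime] .
    show "t \<in> lit_quotient x b (prime_implicants (decide x f)) \<union>
      (prime_implicants (decide x f) \<inter> prime_implicants (f b))"
    proof (cases "implicant t (f (\<not> b))")
      case True
      have "implicant t (\<lambda>\<alpha>. f False \<alpha> \<and> f True \<alpha>)"
        using prime True unfolding implicant_conj_iff prime_implicant_def by (cases b) auto
      then have "prime_implicant t (\<lambda>\<alpha>. f False \<alpha> \<and> f True \<alpha>)"
        using prime_implicant_of_stronger[OF prime] by (cases b) auto
      then have "t \<in> prime_implicants (decide x f)"
        using prime_implicant_decide_iff[OF \<open>x \<notin> var_term t\<close>]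
        unfolding prime_implicants_def by simp
      then show ?thesis using \<open>t \<in> prime_implicants (f b)\<close> by blast
    next
      case False
      then have "insert (x, b) t \<in> prime_implicants (decide x f)"
        using prime prime_implicant_insert_decide_iff[OF \<open>x \<notin> var_term t\<close>]
        unfolding prime_implicants_def by simp
      then show ?thesis using \<open>x \<notin> var_term t\<close> unfolding lit_quotient_def by blast
    qed
  qed
qed (use lit_quotient_subset[OF order_refl] in blast)

lemma prime_implicants_decide_eqI:
  assumes sub: "S \<subseteq> prime_implicants (decide x f)"
    and cofactors: "\<And>b. prime_implicants (f b) \<subseteq> lit_quotient x b S \<union> S"
    and without_var: "{t \<in> prime_implicants (decide x f). x \<notin> var_term t} \<subseteq> S"
  shows "S = prime_implicants (decide x f)"
proof
  show "prime_implicants (decide x f) \<subseteq> S"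
  proof
    fix t assume t: "t \<in> prime_implicants (decide x f)"
    show "t \<in> S"
    proof (cases "x \<in> var_term t")
      case False
      then show ?thesis using t without_var by blast
    next
      case True
      then obtain b where "(x, b) \<in> t" unfolding var_term_def by force
      define t0 where "t0 = t - {(x, b)}"
      have "is_term t" using t unfolding prime_implicants_def prime_implicant_def implicant_def by blast
      then have "x \<notin> var_term t0" unfolding t0_def using \<open>(x, b) \<in> t\<close> by (rule var_term_Diff_lit)
      have "t = insert (x, b) t0" unfolding t0_def using \<open>(x, b) \<in> t\<close> by (simp add: insert_absorb)
      then have "prime_implicant t0 (f b)" and not_other: "\<not> implicant t0 (f (\<not> b))"
        using t prime_implicant_insert_decide_iff[OF \<open>x \<notin> var_term t0\<close>]
        unfolding prime_implicants_def by simp_all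
      have "t0 \<notin> S"
      proof
        assume "t0 \<in> S"
        then have "implicant t0 (decide x f)"
          using sub unfolding prime_implicants_def prime_implicant_def by blast
        then have "implicant t0 (f (\<not> b))"
          unfolding implicant_decide_iff[OF \<open>x \<notin> var_term t0\<close>] implicant_conj_iff
          by (cases b) simp_all
        then show False using not_other by contradiction
      qed
      moreover have "t0 \<in> lit_quotient x b S \<union> S"
        using cofactors \<open>prime_implicant t0 (f b)\<close> unfolding prime_implicants_def by blast
      ultimately show "t \<in> S"
        using \<open>t = insert (x, b) t0\<close> \<open>x \<notin> var_term t0\<close> unfolding lit_quotient_def by blast
    qed
  qed
qed (rule sub)

end

theorem proposition9:
  fixes x :: 'v and u w :: "'v circuit" and S :: "'v trm set"
  assumes "dec_dnnf (CDec x u w)"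
    and "S \<subseteq> IP (CDec x u w)"
  defines "Su \<equiv> {t. x \<notin> var_term t \<and> insert (x, False) t \<in> S} \<union> (S \<inter> IP u)"
    and "Sw \<equiv> {t. x \<notin> var_term t \<and> insert (x, True) t \<in> S} \<union> (S \<inter> IP w)"
    and "S' \<equiv> {t. t \<in> S \<and> x \<notin> var_term t}"
  shows "Su \<subseteq> IP u \<and> Sw \<subseteq> IP w \<and>
    (S = IP (CDec x u w) \<longleftrightarrow>
      (Su = IP u \<and> Sw = IP w \<and>
       S' = max_ent {tu \<union> tw | tu tw. tu \<in> Su \<and> tw \<in> Sw \<and> is_term (tu \<union> tw)}))"
proof -
  define f where "f = (\<lambda>b. if b then eval w else eval u)"
  interpret decision x f
    using assms(1) by unfold_locales (simp add: f_def eval_indep)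
  have IP: "IP (CDec x u w) = prime_implicants (decide x f)"
      "IP u = prime_implicants (f False)" "IP w = prime_implicants (f True)"
    by (simp_all add: IP_def prime_implicants_def f_def eval_CDec)
  have S: "S \<subseteq> prime_implicants (decide x f)" using assms(2) IP by simp
  have Su: "Su = lit_quotient x False S \<union> (S \<inter> prime_implicants (f False))"
    and Sw: "Sw = lit_quotient x True S \<union> (S \<inter> prime_implicants (f True))"
    unfolding Su_def Sw_def lit_quotient_def IP by simp_all
  have "Su \<subseteq> IP u" "Sw \<subseteq> IP w"
    using lit_quotient_subset[OF S] unfolding Su Sw IP by blast+
  moreover have "S = IP (CDec x u w) \<longleftrightarrow> Su = IP u \<and> Sw = IP w \<and> S' = max_ent (conj_terms Su Sw)"
  proof
    assume "S = IP (CDec x u w)"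
    then show "Su = IP u \<and> Sw = IP w \<and> S' = max_ent (conj_terms Su Sw)"
      using lit_quotient_prime_implicants_decide prime_implicants_decide_without_var
      unfolding Su Sw S'_def IP by simp
  next
    assume branches: "Su = IP u \<and> Sw = IP w \<and> S' = max_ent (conj_terms Su Sw)"
    then have "{t \<in> prime_implicants (decide x f). x \<notin> var_term t} \<subseteq> S"
      using prime_implicants_decide_without_var unfolding S'_def IP by auto
    moreover have "prime_implicants (f b) \<subseteq> lit_quotient x b S \<union> S" for b
      using branches unfolding Su Sw IP by (cases b) auto
    ultimately show "S = IP (CDec x u w)"
      using prime_implicants_decide_eqI[OF S] unfolding IP by blast
  qed
  ultimately show ?thesis unfolding conj_terms_def by blast
qed

end
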